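(* Let $b\in\mathbb{R}$ with $0<|b|<1$ and $p(x,\xi,\tau)=\tau^3-3(x^2+\xi^2)\tau-2bx^3$ for $(x,\xi,\tau)\in\mathbb{R}^3$. Then there do not exist real-valued $C^\infty$ functions $L,A,B$ defined on a neighborhood of $(0,0)$ in $\mathbb{R}^2$ such that $p(x,\xi,\tau)=(\tau-L(x,\xi))(\tau^2+A(x,\xi)\tau+B(x,\xi))$ for all $\tau\in\mathbb{R}$ and all $(x,\xi)$ in that neighborhood; i.e. $p$ admits no $C^\infty$ root near the origin. *)

theory Defs
  imports "HOL-Analysis.Analysis"
begin

definition partial_x :: "(real \<times> real \<Rightarrow> real) \<Rightarrow> real \<times> real \<Rightarrow> real" where
  "partial_x f z = frechet_derivative f (at z) (1, 0)"

definition partial_y :: "(real \<times> real \<Rightarrow> real) \<Rightarrow> real \<times> real \<Rightarrow> real" where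
  "partial_y f z = frechet_derivative f (at z) (0, 1)"

fun Ck_on :: "nat \<Rightarrow> (real \<times> real \<Rightarrow> real) \<Rightarrow> (real \<times> real) set \<Rightarrow> bool" where
  "Ck_on 0 f U = continuous_on U f"
| "Ck_on (Suc k) f U =
     ((\<forall>z\<in>U. f differentiable (at z)) \<and> Ck_on k (partial_x f) U \<and> Ck_on k (partial_y f) U)"

definition smooth_on :: "(real \<times> real \<Rightarrow> real) \<Rightarrow> (real \<times> real) set \<Rightarrow> bool" where
  "smooth_on f U \<longleftrightarrow> (\<forall>k. Ck_on k f U)"

definition p_poly :: "real \<Rightarrow> real \<Rightarrow> real \<Rightarrow> real \<Rightarrow> real" where
  "p_poly b x \<xi> \<tau> = \<tau>^3 - 3 * (x^2 + \<xi>^2) * \<tau> - 2 * b * x^3"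

end

theory Submission
  imports Defs
begin

(* A root L of p near the origin only needs to be differentiable at (0,0)
   for a contradiction: p is homogeneous of degree 3 in (x, xi, tau), so p(x,xi,L(x,xi)) = 0
   can be blown up along every ray t(x,xi), and letting t -> 0 the difference quotients
   L(t(x,xi))/t converge to the differential D(x,xi).  Hence the linear form D is itself a
   root of p on the whole plane, and an elementary computation on four test points shows
   that p has no linear root when b <> 0.

   The main theorem
   combines these. *)

lemma p_poly_homogeneous:
  "p_poly b (t * x) (t * \<xi>) (t * s) = t ^ 3 * p_poly b x \<xi> s"
  unfolding p_poly_def by algebra

lemma ray_quotient_tendsto_derivative:
  fixes L :: "'a::real_normed_vector \<Rightarrow> real"
  assumes der: "(L has_derivative D) (at 0)" and L0: "L 0 = 0"
  shows "((\<lambda>t. L (t *\<^sub>R v) / t) \<longlongrightarrow> D v) (at 0)"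
proof -
  have ray: "((\<lambda>t::real. t *\<^sub>R v) has_derivative (\<lambda>t. t *\<^sub>R v)) (at 0)"
    by (auto intro!: derivative_eq_intros)
  have "((\<lambda>t. L (t *\<^sub>R v)) has_derivative (\<lambda>t. D (t *\<^sub>R v))) (at 0)"
    using diff_chain_at[OF ray] der by (simp add: o_def)
  moreover have "(\<lambda>t. D (t *\<^sub>R v)) = (\<lambda>t. D v * t)"
    using linear_scale[OF has_derivative_linear[OF der]] by (auto simp: mult.commute)
  ultimately have "((\<lambda>t. L (t *\<^sub>R v)) has_field_derivative D v) (at 0)"
    by (simp add: has_field_derivative_def)
  then show ?thesis
    unfolding has_field_derivative_iff by (simp add: L0)
qed

text \<open>This uses the homogeneity of \<open>p\<close> along each ray and continuity of \<open>p\<close> in \<open>\<tau>\<close>.\<close>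
lemma derivative_of_root_is_root:
  assumes "open U" and "(0, 0) \<in> U"
    and root: "\<And>x \<xi>. (x, \<xi>) \<in> U \<Longrightarrow> p_poly b x \<xi> (L (x, \<xi>)) = 0"
    and der: "(L has_derivative D) (at (0, 0))"
  shows "p_poly b x \<xi> (D (x, \<xi>)) = 0"
proof -
  have L0: "L 0 = 0"
    using root[of 0 0] assms(2) by (simp add: p_poly_def zero_prod_def)
  have der0: "(L has_derivative D) (at 0)"
    using der by (simp add: zero_prod_def)
  define g where "g t = L (t *\<^sub>R (x, \<xi>)) / t" for t :: real
  have g_lim: "(g \<longlongrightarrow> D (x, \<xi>)) (at 0)"
    unfolding g_def by (rule ray_quotient_tendsto_derivative[OF der0 L0])
  have "((\<lambda>t. t *\<^sub>R (x, \<xi>)) \<longlongrightarrow> 0 *\<^sub>R (x, \<xi>)) (at 0)"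
    by (intro tendsto_intros)
  then have near: "eventually (\<lambda>t. t *\<^sub>R (x, \<xi>) \<in> U) (at 0)"
    using assms(1,2) topological_tendstoD by (fastforce simp: zero_prod_def)
  have "((\<lambda>t. p_poly b x \<xi> (g t)) \<longlongrightarrow> p_poly b x \<xi> (D (x, \<xi>))) (at 0)"
    unfolding p_poly_def by (intro tendsto_intros g_lim)
  moreover have "eventually (\<lambda>t. p_poly b x \<xi> (g t) = 0) (at 0)"
    using eventually_conj[OF near eventually_neq_at_within[of 0 0 UNIV]]
  proof (rule eventually_mono)
    fix t :: real
    assume t: "t *\<^sub>R (x, \<xi>) \<in> U \<and> t \<noteq> 0"
    then have "L (t * x, t * \<xi>) = t * g t" by (simp add: g_def)
    then have "p_poly b (t * x) (t * \<xi>) (t * g t) = 0" 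
      using t root[of "t * x" "t * \<xi>"] by simp
    then show "p_poly b x \<xi> (g t) = 0" using t by (simp add: p_poly_homogeneous)
  qed
  ultimately have "((\<lambda>t. 0) \<longlongrightarrow> p_poly b x \<xi> (D (x, \<xi>))) (at (0::real))"
    by (rule Lim_transform_eventually)
  then show ?thesis by (simp add: tendsto_const_iff)
qed

text \<open>Evaluating at
  \<open>(1,0), (0,1), (1,1), (1,-1)\<close> forces \<open>c (a\<^sup>2 - 1) = 0\<close> and \<open>a (c\<^sup>2 - 1) = 0\<close> with
  \<open>c\<^sup>3 = 3c\<close>, and every solution of these makes \<open>b = 0\<close>.\<close>
lemma no_linear_root:
  fixes a c b :: real
  assumes "b \<noteq> 0"
  shows "\<not> (\<forall>x \<xi>. p_poly b x \<xi> (a * x + c * \<xi>) = 0)"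
proof
  assume h: "\<forall>x \<xi>. p_poly b x \<xi> (a * x + c * \<xi>) = 0"
  have e10: "a^3 - 3*a - 2*b = 0" using h[rule_format, of 1 0] by (simp add: p_poly_def)
  have e01: "c^3 - 3*c = 0" using h[rule_format, of 0 1] by (simp add: p_poly_def)
  have e11: "(a+c)^3 - 6*(a+c) - 2*b = 0" using h[rule_format, of 1 1] by (simp add: p_poly_def)
  have e1m: "(a-c)^3 - 6*(a-c) - 2*b = 0"
    using h[rule_format, of 1 "-1"] by (simp add: p_poly_def algebra_simps)
  have ca: "c * (a^2 - 1) = 0" using e10 e01 e11 e1m by algebra
  have ac: "a * (c^2 - 1) = 0" using e10 e01 e11 e1m by algebra
  show False
  proof (cases "c = 0")
    case True
    then show False using ac e10 assms by simp
  next
    case False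
    then have "a^2 = 1" using ca by simp
    moreover have "c^2 = 3"
      using e01 False by (simp add: power3_eq_cube power2_eq_square algebra_simps)
    ultimately show False using ac by auto
  qed
qed

lemma linear_plane_coordinates:
  fixes D :: "real \<times> real \<Rightarrow> real"
  assumes "linear D"
  shows "D (x, \<xi>) = D (1, 0) * x + D (0, 1) * \<xi>"
proof -
  have "(x, \<xi>) = x *\<^sub>R (1, 0) + \<xi> *\<^sub>R (0, 1)" by simp
  then have "D (x, \<xi>) = x * D (1, 0) + \<xi> * D (0, 1)"
    by (simp only: linear_add[OF assms] linear_scale[OF assms] real_scaleR_def)
  then show ?thesis by (simp add: mult.commute)
qed

lemma smooth_on_differentiable:
  assumes "smooth_on f U" and "z \<in> U"
  shows "f differentiable (at z)"
proof -
  have "Ck_on (Suc 0) f U" using assms(1) unfolding smooth_on_def by blast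
  then show ?thesis using assms(2) by simp
qed

theorem mainTheorem10:
  fixes b :: real
  assumes "0 < \<bar>b\<bar>" and "\<bar>b\<bar> < 1"
  shows "\<not> (\<exists>U L A B. open U \<and> (0, 0) \<in> U \<and>
            smooth_on L U \<and> smooth_on A U \<and> smooth_on B U \<and>
            (\<forall>x \<xi> \<tau>. (x, \<xi>) \<in> U \<longrightarrow>
               p_poly b x \<xi> \<tau> = (\<tau> - L (x, \<xi>)) * (\<tau>^2 + A (x, \<xi>) * \<tau> + B (x, \<xi>))))"
proof
  assume "\<exists>U L A B. open U \<and> (0, 0) \<in> U \<and>
            smooth_on L U \<and> smooth_on A U \<and> smooth_on B U \<and>
            (\<forall>x \<xi> \<tau>. (x, \<xi>) \<in> U \<longrightarrow>
               p_poly b x \<xi> \<tau> = (\<tau> - L (x, \<xi>)) * (\<tau>^2 + A (x, \<xi>) * \<tau> + B (x, \<xi>)))"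
  then obtain U L A B where U: "open U" "(0, 0) \<in> U" and smooth: "smooth_on L U"
    and factor: "\<forall>x \<xi> \<tau>. (x, \<xi>) \<in> U \<longrightarrow>
               p_poly b x \<xi> \<tau> = (\<tau> - L (x, \<xi>)) * (\<tau>^2 + A (x, \<xi>) * \<tau> + B (x, \<xi>))"
    by blast
  have root: "p_poly b x \<xi> (L (x, \<xi>)) = 0" if "(x, \<xi>) \<in> U" for x \<xi>
    using factor that by simp
  obtain D where der: "(L has_derivative D) (at (0, 0))"
    using smooth_on_differentiable[OF smooth U(2)] unfolding differentiable_def by blast
  have "\<forall>x \<xi>. p_poly b x \<xi> (D (1, 0) * x + D (0, 1) * \<xi>) = 0"
  proof (intro allI)
    fix x \<xi>
    show "p_poly b x \<xi> (D (1, 0) * x + D (0, 1) * \<xi>) = 0"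
      using derivative_of_root_is_root[OF U root der, of x \<xi>]
      unfolding linear_plane_coordinates[OF has_derivative_linear[OF der], of x \<xi>] .
  qed
  moreover have "b \<noteq> 0" using assms(1) by simp
  ultimately show False using no_linear_root by blast
qed

end
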